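(* Let $\omega_0(n)=(n+1)/\pi$ and consider $\mathcal T$ on $\mathcal X_{\omega_0}$. For $n\ge1$ and $0\le r\le3^n-1$ define finite sets $P^{(n)}_{k,r}\subset\mathbf Q[\xi]$ of polynomials of degree one by $P^{(n)}_{0,r}=\{3^n\xi+r\}$ and, for $k\ge0$, \[P^{(n)}_{k+1,r}=\{2P;\ P\in P^{(n)}_{k,r}\}\cup\{(2P-1)/3;\ P\in P^{(n)}_{k,r},\ P(0)\equiv2\bmod 3\}.\] Then for every $n\ge1$, \[\|\mathcal T^n\|^2=\max_{0\le r\le3^n-1}\ \sum_{a\xi+b\in P^{(n)}_{n,r}}\frac{a}{3^n}.\]
   Context: $T\colon\mathbf Z_+\to\mathbf Z_+$ is the modified Collatz map: $T(n)=n/2$ for $n$ even, $T(n)=(3n+1)/2$ for $n$ odd. $\mathcal X_{\omega_0}$ is the Hilbert space of holomorphic functions $f(z)=\sum_{n\ge3}c_nz^n$ on the unit disk with $\|f\|^2=\sum_{n\ge3}\pi|c_n|^2/(n+1)<\infty$ (the Bergman space modulo $\mathrm{span}[1,z,z^2]$). $\mathcal T\sum_{n\ge3}c_nz^n=\sum_{j\ge3,\,T(j)\ge3}c_jz^{T(j)}$, a bounded operator on $\mathcal X_{\omega_0}$; $\|\cdot\|$ is its operator norm. *)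

theory Defs
  imports "HOL-Analysis.Analysis" "HOL-Computational_Algebra.Polynomial"
begin

definition collatzT :: "nat \<Rightarrow> nat" where
  "collatzT n = (if even n then n div 2 else (3 * n + 1) div 2)"

text \<open>Elements of X_omega0 are represented by their Taylor coefficient sequences
  c with c n = 0 for n < 3 and sum of pi |c n|^2/(n+1) finite.\<close>
definition Xspace :: "(nat \<Rightarrow> complex) set" where
  "Xspace = {c. (\<forall>n<3. c n = 0) \<and> summable (\<lambda>n. pi * (cmod (c n))\<^sup>2 / (real n + 1))}"

definition Xnorm :: "(nat \<Rightarrow> complex) \<Rightarrow> real" where
  "Xnorm c = sqrt (\<Sum>n. pi * (cmod (c n))\<^sup>2 / (real n + 1))"

text \<open>The operator: sum_{j>=3, T j >= 3} c_j z^{T j}; coefficient of z^m.\<close>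
definition Top :: "(nat \<Rightarrow> complex) \<Rightarrow> (nat \<Rightarrow> complex)" where
  "Top c = (\<lambda>m. if m < 3 then 0 else (\<Sum>j\<in>{j. 3 \<le> j \<and> collatzT j = m}. c j))"

definition Top_pow_norm :: "nat \<Rightarrow> real" where
  "Top_pow_norm k = Sup {Xnorm ((Top ^^ k) c) | c. c \<in> Xspace \<and> Xnorm c \<le> 1}"

fun Pset :: "nat \<Rightarrow> nat \<Rightarrow> nat \<Rightarrow> rat poly set" where
  "Pset n 0 r = {[: of_nat r, 3 ^ n :]}"
| "Pset n (Suc k) r =
     (\<lambda>P. smult 2 P) ` Pset n k r \<union>
     (\<lambda>P. smult (1/3) (smult 2 P - 1)) `
        {P \<in> Pset n k r. \<exists>m::int. poly P 0 = of_int (3 * m + 2)}"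

end

theory Submission
  imports Defs
begin

text \<open>The coefficient m of T^k c is the sum of the c j over the fiber of all j whose
  first k iterates stay \<ge> 3 and end at m. Cauchy-Schwarz on each fiber shows that
  \<parallel>T^k\<parallel>^2 is the supremum over m of W(m) / (m + 1), where W(m) is the sum of j + 1 over
  the fiber, and c j = j + 1 on a single fiber attains the ratio. For k \<le> n the k-fold
  preimages of 3^n x + r under T are exactly the values a x + b of the polynomials
  a \<xi> + b in P^(n)_{k,r}, and 3^n (b + 1) \<le> a (r + 1). Hence W(m) \<le> (\<Sum> a / 3^n) (m + 1)
  for r = m mod 3^n, while W(3^n x + r) \<ge> x \<Sum> a for large x, which brings the ratio
  arbitrarily close to \<Sum> a / 3^n.\<close>

lemma collatzT_double: "collatzT (2 * i) = i"
  by (simp add: collatzT_def)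

lemma collatzT_double_plus_one: "collatzT (2 * i + 1) = 3 * i + 2"
  by (simp add: collatzT_def)

lemma collatzT_eq_iff: "collatzT j = m \<longleftrightarrow> j = 2 * m \<or> (m mod 3 = 2 \<and> 3 * j + 1 = 2 * m)"
proof (cases "even j")
  case True
  then obtain i where j: "j = 2 * i" ..
  have "3 * (2 * i) + 1 \<noteq> 2 * m" by presburger
  then show ?thesis by (auto simp: j collatzT_double)
next
  case False
  then obtain i where j: "j = 2 * i + 1" using oddE by blast
  have "collatzT j = 3 * i + 2" unfolding j by (rule collatzT_double_plus_one)
  moreover have "(3 * i + 2) mod 3 = 2" "j \<noteq> 2 * m" unfolding j by presburger+
  ultimately show ?thesis by (auto simp: j)
qed

lemma collatzT_eq_affine_iff:
  assumes "3 dvd a"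
  shows "collatzT j = a * x + b \<longleftrightarrow>
    j = 2 * a * x + 2 * b \<or> (b mod 3 = 2 \<and> j = 2 * a div 3 * x + (2 * b - 1) div 3)"
proof -
  obtain a' where a: "a = 3 * a'" using assms ..
  have "(a * x + b) mod 3 = b mod 3" by (simp add: a mult.assoc)
  moreover have "3 * j + 1 = 2 * (a * x + b) \<longleftrightarrow> j = 2 * a div 3 * x + (2 * b - 1) div 3"
    if "b mod 3 = 2"
  proof -
    have "b = 3 * (b div 3) + 2" using that by presburger
    then obtain q where b: "b = 3 * q + 2" by blast
    have m: "a * x + b = 3 * (a' * x) + 3 * q + 2" by (simp add: a b)
    have j: "2 * a div 3 * x + (2 * b - 1) div 3 = 2 * (a' * x) + (2 * q + 1)"
      by (simp add: a b)
    show ?thesis unfolding m j by arith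
  qed
  ultimately show ?thesis
    unfolding collatzT_eq_iff by (auto simp: algebra_simps)
qed

lemma le_double_collatzT: "j \<le> 2 * collatzT j"
  by (auto simp: collatzT_def)

lemma double_collatzT_Suc_le: "2 * (collatzT j + 1) \<le> 3 * (j + 1)"
  by (auto simp: collatzT_def)

lemma le_funpow_collatzT: "j \<le> 2 ^ k * (collatzT ^^ k) j"
proof (induction k)
  case (Suc k)
  have "j \<le> 2 ^ k * (collatzT ^^ k) j" by (fact Suc)
  also have "2 ^ k * (collatzT ^^ k) j \<le> 2 ^ k * (2 * collatzT ((collatzT ^^ k) j))"
    using le_double_collatzT by simp
  finally show ?case by (simp add: mult.assoc)
qed simp

lemma funpow_collatzT_Suc_le: "2 ^ k * ((collatzT ^^ k) j + 1) \<le> 3 ^ k * (j + 1)"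
proof (induction k)
  case (Suc k)
  have "2 ^ Suc k * ((collatzT ^^ Suc k) j + 1) = 2 ^ k * (2 * (collatzT ((collatzT ^^ k) j) + 1))"
    by simp
  also have "\<dots> \<le> 2 ^ k * (3 * ((collatzT ^^ k) j + 1))"
    using double_collatzT_Suc_le by (intro mult_left_mono) auto
  also have "\<dots> = 3 * (2 ^ k * ((collatzT ^^ k) j + 1))"
    by (simp add: algebra_simps)
  also have "\<dots> \<le> 3 * (3 ^ k * (j + 1))"
    using Suc by simp
  finally show ?case by simp
qed simp

text \<open>The pair (a, b) stands for the polynomial a \<xi> + b of Pset n k r; for k \<le> n the
  slope a is divisible by 3 at every step, so the divisions by 3 are exact.\<close>
fun branches :: "nat \<Rightarrow> nat \<Rightarrow> nat \<Rightarrow> (nat \<times> nat) set" where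
  "branches n 0 r = {(3 ^ n, r)}"
| "branches n (Suc k) r = (\<lambda>(a, b). (2 * a, 2 * b)) ` branches n k r \<union>
     (\<lambda>(a, b). (2 * a div 3, (2 * b - 1) div 3)) ` {(a, b) \<in> branches n k r. b mod 3 = 2}"

lemma finite_branches: "finite (branches n k r)"
proof (induction k)
  case (Suc k)
  have "finite {(a, b) \<in> branches n k r. b mod 3 = 2}"
    by (rule finite_subset[OF _ Suc]) auto
  with Suc show ?case by simp
qed simp

lemma branches_invariant:
  assumes "k \<le> n" "(a, b) \<in> branches n k r"
  shows "3 ^ (n - k) dvd a \<and> 3 ^ n * (b + 1) \<le> a * (r + 1)"
  using assms
proof (induction k arbitrary: a b)
  case (Suc k)
  then have n: "n - k = Suc (n - Suc k)" by simp
  from Suc.prems(2) consider (double) a0 b0 where "(a0, b0) \<in> branches n k r" "a = 2 * a0" "b = 2 * b0"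
    | (odd) a0 b0 where "(a0, b0) \<in> branches n k r" "b0 mod 3 = 2"
        "a = 2 * a0 div 3" "b = (2 * b0 - 1) div 3"
    by auto
  then show ?case
  proof cases
    case double
    with Suc have "3 ^ (n - k) dvd a0" "3 ^ n * (b0 + 1) \<le> a0 * (r + 1)" by auto
    with double n show ?thesis by (auto simp: algebra_simps dest: dvd_mult_left)
  next
    case odd
    with Suc have IH: "3 ^ (n - k) dvd a0" "3 ^ n * (b0 + 1) \<le> a0 * (r + 1)" by auto
    obtain a1 where a1: "a0 = 3 * a1" "3 ^ (n - Suc k) dvd a1"
      using IH(1) n by (auto simp: mult.assoc)
    obtain b1 where b1: "b0 = 3 * b1 + 2"
      using odd(2) by (metis mod_div_mult_eq add.commute mult.commute)
    have "3 ^ n * (b1 + 1) \<le> a1 * (r + 1)"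
      using IH(2) by (simp add: a1 b1 algebra_simps)
    then show ?thesis
      using odd a1 b1 by (simp add: algebra_simps)
  qed
qed simp

lemma three_dvd_branch_slope: "k < n \<Longrightarrow> (a, b) \<in> branches n k r \<Longrightarrow> 3 dvd a"
  using branches_invariant[of k n a b r] by (metis Suc_diff_Suc dvd_mult_left power_Suc order.strict_implies_order)

lemma branch_value_Suc_if_collatzT:
  assumes "k < n" "collatzT j \<in> (\<lambda>(a, b). a * x + b) ` branches n k r"
  shows "j \<in> (\<lambda>(a, b). a * x + b) ` branches n (Suc k) r"
proof -
  obtain a b where ab: "(a, b) \<in> branches n k r" "collatzT j = a * x + b"
    using assms(2) by auto
  have "3 dvd a" using three_dvd_branch_slope[OF assms(1) ab(1)] .
  then consider "j = 2 * a * x + 2 * b" | "b mod 3 = 2" "j = 2 * a div 3 * x + (2 * b - 1) div 3"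
    using ab(2) collatzT_eq_affine_iff by blast
  then show ?thesis
  proof cases
    case 1
    then have "j = (\<lambda>(a, b). a * x + b) (2 * a, 2 * b)" by (simp add: mult.assoc)
    moreover have "(2 * a, 2 * b) \<in> branches n (Suc k) r" using ab(1) by force
    ultimately show ?thesis by (rule image_eqI)
  next
    case 2
    then have "j = (\<lambda>(a, b). a * x + b) (2 * a div 3, (2 * b - 1) div 3)" by simp
    moreover have "(2 * a div 3, (2 * b - 1) div 3) \<in> branches n (Suc k) r"
      using ab(1) 2(1) by force
    ultimately show ?thesis by (rule image_eqI)
  qed
qed

lemma collatzT_branch_value_if_Suc:
  assumes "k < n" "j \<in> (\<lambda>(a, b). a * x + b) ` branches n (Suc k) r"
  shows "collatzT j \<in> (\<lambda>(a, b). a * x + b) ` branches n k r"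
proof -
  obtain a b where "(a, b) \<in> branches n (Suc k) r" "j = a * x + b"
    using assms(2) by (auto simp del: branches.simps)
  then consider (double) a0 b0 where "(a0, b0) \<in> branches n k r" "j = 2 * a0 * x + 2 * b0"
    | (odd) a0 b0 where "(a0, b0) \<in> branches n k r" "b0 mod 3 = 2"
        "j = 2 * a0 div 3 * x + (2 * b0 - 1) div 3"
    by (auto simp: mult.assoc)
  then show ?thesis
  proof cases
    case double
    then have "collatzT j = a0 * x + b0"
      using collatzT_double[of "a0 * x + b0"] by (simp add: algebra_simps)
    with double(1) show ?thesis by force
  next
    case odd
    have "3 dvd a0" using three_dvd_branch_slope[OF assms(1) odd(1)] .
    then have "collatzT j = a0 * x + b0"
      using collatzT_eq_affine_iff odd(2,3) by blast
    with odd(1) show ?thesis by force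
  qed
qed

lemma branches_image:
  assumes "k \<le> n"
  shows "(\<lambda>(a, b). a * x + b) ` branches n k r = {j. (collatzT ^^ k) j = 3 ^ n * x + r}"
  using assms
proof (induction k)
  case (Suc k)
  then have "k < n" and IH: "{j. (collatzT ^^ k) j = 3 ^ n * x + r} = (\<lambda>(a, b). a * x + b) ` branches n k r"
    by simp_all
  have "collatzT j \<in> (\<lambda>(a, b). a * x + b) ` branches n k r \<longleftrightarrow>
      j \<in> (\<lambda>(a, b). a * x + b) ` branches n (Suc k) r" for j
    using branch_value_Suc_if_collatzT[OF \<open>k < n\<close>] collatzT_branch_value_if_Suc[OF \<open>k < n\<close>]
    by blast
  then show ?case
    unfolding IH[symmetric] by (auto simp only: funpow_Suc_right o_apply mem_Collect_eq)
qed simp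

definition affine_poly :: "nat \<times> nat \<Rightarrow> rat poly" where
  "affine_poly = (\<lambda>(a, b). [:of_nat b, of_nat a:])"

lemma inj_affine_poly: "inj affine_poly"
  by (auto simp: inj_def affine_poly_def)

lemma smult_2_affine_poly: "smult 2 (affine_poly (a, b)) = affine_poly (2 * a, 2 * b)"
  by (simp add: affine_poly_def)

lemma affine_poly_odd_branch:
  assumes "3 dvd a" "b mod 3 = 2"
  shows "smult (1/3) (smult 2 (affine_poly (a, b)) - 1) = affine_poly (2 * a div 3, (2 * b - 1) div 3)"
proof -
  obtain a' where a: "a = 3 * a'" using assms(1) ..
  have "b = 3 * (b div 3) + 2" using assms(2) by presburger
  then obtain q where b: "b = 3 * q + 2" by blast
  show ?thesis by (simp add: affine_poly_def a b one_pCons field_simps)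
qed

lemma poly_affine_poly_0_mod_3:
  "(\<exists>m::int. poly (affine_poly (a, b)) 0 = of_int (3 * m + 2)) \<longleftrightarrow> b mod 3 = 2"
proof -
  have "(\<exists>m::int. (of_nat b :: rat) = of_int (3 * m + 2)) \<longleftrightarrow> (\<exists>m::int. int b = 3 * m + 2)"
    by (metis of_int_eq_iff of_int_of_nat_eq)
  also have "\<dots> \<longleftrightarrow> b mod 3 = 2" by presburger
  finally show ?thesis by (simp add: affine_poly_def)
qed

lemma Pset_eq_image_branches:
  assumes "k \<le> n"
  shows "Pset n k r = affine_poly ` branches n k r"
  using assms
proof (induction k)
  case 0
  then show ?case by (simp add: affine_poly_def)
next
  case (Suc k)
  let ?B = "branches n k r" and ?B2 = "{(a, b) \<in> branches n k r. b mod 3 = 2}"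
  have IH: "Pset n k r = affine_poly ` ?B" using Suc by simp
  have double: "(\<lambda>P. smult 2 P) ` affine_poly ` ?B = affine_poly ` (\<lambda>(a, b). (2 * a, 2 * b)) ` ?B"
    unfolding image_image by (rule image_cong) (auto simp: smult_2_affine_poly)
  have "{P \<in> affine_poly ` ?B. \<exists>m::int. poly P 0 = of_int (3 * m + 2)} = affine_poly ` ?B2"
    using poly_affine_poly_0_mod_3 by fastforce
  moreover have "(\<lambda>P. smult (1/3) (smult 2 P - 1)) ` affine_poly ` ?B2 =
      affine_poly ` (\<lambda>(a, b). (2 * a div 3, (2 * b - 1) div 3)) ` ?B2"
    unfolding image_image
    using affine_poly_odd_branch three_dvd_branch_slope Suc.prems
    by (intro image_cong) (auto simp: Suc_le_eq)
  ultimately show ?case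
    by (simp only: Pset.simps branches.simps IH double image_Un)
qed

text \<open>Top discards the coefficients below 3, hence the condition on all intermediate iterates.\<close>
definition fiber :: "nat \<Rightarrow> nat \<Rightarrow> nat set" where
  "fiber k m = {j. (\<forall>i\<le>k. 3 \<le> (collatzT ^^ i) j) \<and> (collatzT ^^ k) j = m}"

lemma fiber_subset_atMost: "fiber k m \<subseteq> {..2 ^ k * m}"
  unfolding fiber_def using le_funpow_collatzT by fastforce

lemma finite_fiber: "finite (fiber k m)"
  using fiber_subset_atMost by (rule finite_subset) simp

lemma three_le_funpow_collatzT_fiber: "j \<in> fiber k m \<Longrightarrow> i \<le> k \<Longrightarrow> 3 \<le> (collatzT ^^ i) j"
  unfolding fiber_def by blast

lemma three_le_fiber: "j \<in> fiber k m \<Longrightarrow> 3 \<le> j"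
  using three_le_funpow_collatzT_fiber[of j k m 0] by simp

lemma fiber_empty: "m < 3 \<Longrightarrow> fiber k m = {}"
  using three_le_funpow_collatzT_fiber[of _ k m k] by (force simp: fiber_def)

lemma disjoint_fiber: "m \<noteq> m' \<Longrightarrow> fiber k m \<inter> fiber k m' = {}"
  unfolding fiber_def by auto

lemma fiber_Suc:
  assumes "3 \<le> m"
  shows "fiber (Suc k) m = (\<Union>i\<in>{i. 3 \<le> i \<and> collatzT i = m}. fiber k i)"
  using assms unfolding fiber_def by (auto simp: le_Suc_eq)

lemma finite_collatzT_preimage: "finite {i. 3 \<le> i \<and> collatzT i = m}"
proof (rule finite_subset)
  show "{i. 3 \<le> i \<and> collatzT i = m} \<subseteq> {..2 * m}"
    using le_double_collatzT by fastforce
qed simp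

lemma Top_pow_eq_sum_fiber:
  assumes "\<forall>i<3. c i = 0"
  shows "(Top ^^ k) c m = (\<Sum>j\<in>fiber k m. c j)"
proof (induction k arbitrary: m)
  case 0
  show ?case
  proof (cases "m < 3")
    case False
    then have "fiber 0 m = {m}" by (auto simp: fiber_def)
    then show ?thesis by simp
  qed (use assms fiber_empty in simp)
next
  case (Suc k)
  show ?case
  proof (cases "m < 3")
    case True
    then show ?thesis by (simp add: Top_def fiber_empty)
  next
    case False
    let ?I = "{i. 3 \<le> i \<and> collatzT i = m}"
    have "(Top ^^ Suc k) c m = Top ((Top ^^ k) c) m" by simp
    also have "\<dots> = (\<Sum>i\<in>?I. \<Sum>j\<in>fiber k i. c j)"
      using False Suc unfolding Top_def[of "(Top ^^ k) c"] by simp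
    also have "\<dots> = sum c (\<Union>i\<in>?I. fiber k i)"
      by (rule sum.UNION_disjoint[symmetric])
        (auto simp: finite_collatzT_preimage finite_fiber disjoint_fiber)
    also have "\<dots> = (\<Sum>j\<in>fiber (Suc k) m. c j)"
      using False fiber_Suc by simp
    finally show ?thesis .
  qed
qed

definition fiber_weight :: "nat \<Rightarrow> nat \<Rightarrow> real" where
  "fiber_weight k m = (\<Sum>j\<in>fiber k m. real j + 1)"

lemma fiber_weight_nonneg: "0 \<le> fiber_weight k m"
  unfolding fiber_weight_def by (intro sum_nonneg) simp

lemma nonneg_if_fiber_weight_bound:
  assumes "\<forall>m. fiber_weight k m \<le> L * (real m + 1)"
  shows "0 \<le> L"
proof -
  have "fiber_weight k 0 \<le> L * (real 0 + 1)" using assms by blast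
  with fiber_weight_nonneg[of k 0] show ?thesis by simp
qed

lemma sum_fibers_le_suminf:
  fixes f :: "nat \<Rightarrow> real"
  assumes "summable f" "\<And>j. 0 \<le> f j"
  shows "(\<Sum>m<M. \<Sum>j\<in>fiber k m. f j) \<le> suminf f"
proof -
  have "(\<Sum>m<M. \<Sum>j\<in>fiber k m. f j) = sum f (\<Union>m<M. fiber k m)"
    by (rule sum.UNION_disjoint[symmetric]) (auto simp: finite_fiber disjoint_fiber)
  also have "\<dots> \<le> suminf f"
    using assms(1) by (rule sum_le_suminf) (auto simp: finite_fiber assms(2))
  finally show ?thesis .
qed

lemma Top_pow_supported_on_fiber:
  assumes "\<And>j. j \<notin> fiber k m \<Longrightarrow> c j = 0"
  shows "(Top ^^ k) c m' = (if m' = m then (\<Sum>j\<in>fiber k m. c j) else 0)"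
proof -
  have c0: "\<forall>i<3. c i = 0"
    using assms three_le_fiber by (meson not_le)
  show ?thesis
  proof (cases "m' = m")
    case False
    then have "\<forall>j\<in>fiber k m'. c j = 0"
      using disjoint_fiber[OF False] assms by blast
    then show ?thesis by (simp add: Top_pow_eq_sum_fiber[OF c0] False)
  qed (simp add: Top_pow_eq_sum_fiber[OF c0])
qed

lemma Xnorm_finite_support:
  assumes "finite S" "\<And>j. j \<notin> S \<Longrightarrow> c j = 0"
  shows "Xnorm c = sqrt (\<Sum>j\<in>S. pi * (cmod (c j))\<^sup>2 / (real j + 1))"
  unfolding Xnorm_def using assms by (subst suminf_finite) auto

lemma norm_Top_pow_sq_le:
  assumes "\<forall>i<3. c i = 0"
  shows "(cmod ((Top ^^ k) c m))\<^sup>2 \<le>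
    fiber_weight k m * (\<Sum>j\<in>fiber k m. (cmod (c j))\<^sup>2 / (real j + 1))"
proof -
  have "cmod ((Top ^^ k) c m) \<le> (\<Sum>j\<in>fiber k m. cmod (c j))"
    unfolding Top_pow_eq_sum_fiber[OF assms] by (rule norm_sum)
  also have "\<dots> = (\<Sum>j\<in>fiber k m. sqrt (real j + 1) * (cmod (c j) / sqrt (real j + 1)))"
    by (intro sum.cong) auto
  finally have "(cmod ((Top ^^ k) c m))\<^sup>2 \<le> (\<dots>)\<^sup>2"
    by (rule power_mono) simp
  also have "\<dots> \<le> (\<Sum>j\<in>fiber k m. (sqrt (real j + 1))\<^sup>2) *
      (\<Sum>j\<in>fiber k m. (cmod (c j) / sqrt (real j + 1))\<^sup>2)"
    by (rule Cauchy_Schwarz_ineq_sum)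
  also have "\<dots> = fiber_weight k m * (\<Sum>j\<in>fiber k m. (cmod (c j))\<^sup>2 / (real j + 1))"
    by (simp add: fiber_weight_def power_divide)
  finally show ?thesis .
qed

lemma Xnorm_Top_pow_le:
  assumes c: "c \<in> Xspace" and bound: "\<forall>m. fiber_weight k m \<le> L * (real m + 1)"
  shows "Xnorm ((Top ^^ k) c) \<le> sqrt L * Xnorm c"
proof -
  define f where "f j = pi * (cmod (c j))\<^sup>2 / (real j + 1)" for j
  define g where "g m = pi * (cmod ((Top ^^ k) c m))\<^sup>2 / (real m + 1)" for m
  have c0: "\<forall>i<3. c i = 0" and "summable f"
    using c unfolding Xspace_def f_def by auto
  have "0 \<le> L" using bound by (rule nonneg_if_fiber_weight_bound)
  have g_le: "g m \<le> L * (\<Sum>j\<in>fiber k m. f j)" for m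
  proof -
    let ?S = "\<Sum>j\<in>fiber k m. (cmod (c j))\<^sup>2 / (real j + 1)"
    have "fiber_weight k m * ?S \<le> L * (real m + 1) * ?S"
      using bound by (intro mult_right_mono) (auto intro: sum_nonneg)
    with norm_Top_pow_sq_le[OF c0, of k m]
    have "(cmod ((Top ^^ k) c m))\<^sup>2 \<le> L * (real m + 1) * ?S" by linarith
    then have "g m \<le> pi * (L * (real m + 1) * ?S) / (real m + 1)"
      unfolding g_def by (intro divide_right_mono mult_left_mono) simp_all
    also have "\<dots> = L * (\<Sum>j\<in>fiber k m. f j)"
      unfolding f_def by (simp add: sum_distrib_left field_simps)
    finally show ?thesis .
  qed
  have partial: "(\<Sum>m<M. g m) \<le> L * suminf f" for M
  proof -
    have "(\<Sum>m<M. g m) \<le> (\<Sum>m<M. L * (\<Sum>j\<in>fiber k m. f j))"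
      by (rule sum_mono) (rule g_le)
    also have "\<dots> = L * (\<Sum>m<M. \<Sum>j\<in>fiber k m. f j)"
      by (simp add: sum_distrib_left)
    also have "\<dots> \<le> L * suminf f"
      using sum_fibers_le_suminf[OF \<open>summable f\<close>] \<open>0 \<le> L\<close>
      by (intro mult_left_mono) (simp_all add: f_def)
    finally show ?thesis .
  qed
  have "summable g"
    by (rule summableI_nonneg_bounded[OF _ partial]) (simp add: g_def)
  then have "suminf g \<le> L * suminf f"
    using partial by (rule suminf_le_const)
  then have "sqrt (suminf g) \<le> sqrt L * sqrt (suminf f)"
    by (simp add: real_sqrt_mult[symmetric])
  then show ?thesis
    unfolding Xnorm_def f_def g_def .
qed

lemma Xnorm_Top_pow_fiber_extremal:
  assumes "fiber k m \<noteq> {}"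
  obtains c where "c \<in> Xspace" "Xnorm c = 1"
    "Xnorm ((Top ^^ k) c) = sqrt (fiber_weight k m / (real m + 1))"
proof -
  let ?F = "fiber k m" and ?W = "fiber_weight k m"
  have "0 < ?W"
    using assms finite_fiber unfolding fiber_weight_def by (intro sum_pos) auto
  define s where "s = sqrt (pi * ?W)"
  have "0 < s" and s2: "s\<^sup>2 = pi * ?W"
    using \<open>0 < ?W\<close> by (simp_all add: s_def)
  define c where "c j = (if j \<in> ?F then complex_of_real ((real j + 1) / s) else 0)" for j
  have c0: "\<forall>i<3. c i = 0"
    unfolding c_def using three_le_fiber by fastforce
  have c_weight: "pi * (cmod (c j))\<^sup>2 / (real j + 1) = pi * (real j + 1) / s\<^sup>2" if "j \<in> ?F" for j
  proof -
    have "cmod (c j) = (real j + 1) / s"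
      unfolding c_def if_P[OF that] norm_of_real using \<open>0 < s\<close> by simp
    then show ?thesis by (simp add: power2_eq_square)
  qed
  have "summable (\<lambda>j. pi * (cmod (c j))\<^sup>2 / (real j + 1))"
    by (rule summable_finite[OF finite_fiber[of k m]]) (simp add: c_def)
  with c0 have "c \<in> Xspace" unfolding Xspace_def by blast
  have "Xnorm c = sqrt (\<Sum>j\<in>?F. pi * (cmod (c j))\<^sup>2 / (real j + 1))"
    by (rule Xnorm_finite_support[OF finite_fiber]) (simp add: c_def)
  also have "\<dots> = sqrt (\<Sum>j\<in>?F. pi * (real j + 1) / s\<^sup>2)"
    using c_weight by simp
  also have "\<dots> = 1"
    using s2 \<open>0 < ?W\<close> by (simp add: fiber_weight_def sum_distrib_left[symmetric] sum_divide_distrib[symmetric])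
  finally have "Xnorm c = 1" .
  have "(Top ^^ k) c m' = (if m' = m then complex_of_real (?W / s) else 0)" for m'
    using Top_pow_supported_on_fiber[of k m c m']
    by (simp add: c_def fiber_weight_def sum_divide_distrib)
  then have "Xnorm ((Top ^^ k) c) = sqrt (pi * (?W / s)\<^sup>2 / (real m + 1))"
    using \<open>0 < s\<close> \<open>0 < ?W\<close> by (subst Xnorm_finite_support[of "{m}"]) (auto simp: norm_divide)
  also have "\<dots> = sqrt (?W / (real m + 1))"
    using s2 \<open>0 < ?W\<close> by (simp add: power_divide power2_eq_square)
  finally show ?thesis
    using that \<open>c \<in> Xspace\<close> \<open>Xnorm c = 1\<close> by blast
qed

lemma Top_pow_norm_sq_bounds:
  assumes bound: "\<forall>m. fiber_weight k m \<le> L * (real m + 1)"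
  shows "(Top_pow_norm k)\<^sup>2 \<le> L" and "fiber_weight k m / (real m + 1) \<le> (Top_pow_norm k)\<^sup>2"
proof -
  define Z where "Z = {Xnorm ((Top ^^ k) c) | c. c \<in> Xspace \<and> Xnorm c \<le> 1}"
  have norm_eq: "Top_pow_norm k = Sup Z"
    unfolding Z_def Top_pow_norm_def ..
  have "0 \<le> L" using bound by (rule nonneg_if_fiber_weight_bound)
  have Z_le: "z \<le> sqrt L" if "z \<in> Z" for z
  proof -
    from that obtain c where "c \<in> Xspace" "Xnorm c \<le> 1" "z = Xnorm ((Top ^^ k) c)"
      unfolding Z_def by blast
    then show ?thesis
      using Xnorm_Top_pow_le[OF _ bound, of c] \<open>0 \<le> L\<close>
      by (metis mult_left_le real_sqrt_ge_zero order_trans)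
  qed
  have "(Top ^^ k) (\<lambda>_. 0) = (\<lambda>_. 0)"
    by (simp add: Top_pow_eq_sum_fiber fun_eq_iff)
  then have "0 \<in> Z"
    unfolding Z_def Xspace_def Xnorm_def by force
  have bdd: "bdd_above Z"
    using Z_le by (rule bdd_aboveI)
  have "0 \<le> Top_pow_norm k"
    unfolding norm_eq using \<open>0 \<in> Z\<close> bdd by (rule cSup_upper)
  moreover have "Top_pow_norm k \<le> sqrt L"
    unfolding norm_eq using \<open>0 \<in> Z\<close> Z_le by (intro cSup_least) auto
  ultimately show "(Top_pow_norm k)\<^sup>2 \<le> L"
    using \<open>0 \<le> L\<close> by (metis power_mono real_sqrt_pow2)
  show "fiber_weight k m / (real m + 1) \<le> (Top_pow_norm k)\<^sup>2"
  proof (cases "fiber k m = {}")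
    case True
    then show ?thesis by (simp add: fiber_weight_def)
  next
    case False
    then obtain c where "c \<in> Xspace" "Xnorm c = 1"
      "Xnorm ((Top ^^ k) c) = sqrt (fiber_weight k m / (real m + 1))"
      by (rule Xnorm_Top_pow_fiber_extremal)
    then have "sqrt (fiber_weight k m / (real m + 1)) \<in> Z"
      unfolding Z_def by force
    then have "sqrt (fiber_weight k m / (real m + 1)) \<le> Top_pow_norm k"
      unfolding norm_eq using bdd by (rule cSup_upper)
    then have "(sqrt (fiber_weight k m / (real m + 1)))\<^sup>2 \<le> (Top_pow_norm k)\<^sup>2"
      by (rule power_mono) (simp add: fiber_weight_nonneg)
    then show ?thesis
      using fiber_weight_nonneg[of k m] by simp
  qed
qed

lemma mem_fiberI:
  assumes j: "(collatzT ^^ k) j = m" and large: "4 * 3 ^ k \<le> m + 1"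
  shows "j \<in> fiber k m"
proof -
  have "3 \<le> (collatzT ^^ i) j" if "i \<le> k" for i
  proof -
    have "(collatzT ^^ (k - i)) ((collatzT ^^ i) j) = (collatzT ^^ (k - i + i)) j"
      by (simp add: funpow_add)
    with j that have "(collatzT ^^ (k - i)) ((collatzT ^^ i) j) = m"
      by simp
    then have "2 ^ (k - i) * (m + 1) \<le> 3 ^ (k - i) * ((collatzT ^^ i) j + 1)"
      using funpow_collatzT_Suc_le[of "k - i" "(collatzT ^^ i) j"] by simp
    moreover have "3 ^ (k - i) * 4 \<le> 2 ^ (k - i) * (m + 1)"
    proof -
      have "3 ^ (k - i) * 4 \<le> 3 ^ k * (4::nat)" by simp
      also have "\<dots> \<le> 1 * (m + 1)" using large by simp
      also have "\<dots> \<le> 2 ^ (k - i) * (m + 1)" by (intro mult_right_mono) simp_all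
      finally show ?thesis .
    qed
    ultimately have "3 ^ (k - i) * 4 \<le> 3 ^ (k - i) * ((collatzT ^^ i) j + 1)" by linarith
    then show ?thesis by simp
  qed
  with j show ?thesis unfolding fiber_def by blast
qed

definition slope_sum :: "nat \<Rightarrow> nat \<Rightarrow> real" where
  "slope_sum n r = (\<Sum>(a, b)\<in>branches n n r. real a)"

lemma fiber_weight_le_slope_sum:
  "fiber_weight n m \<le> slope_sum n (m mod 3 ^ n) / 3 ^ n * (real m + 1)"
proof -
  define r where "r = m mod 3 ^ n"
  define x where "x = m div 3 ^ n"
  have m: "m = 3 ^ n * x + r" unfolding r_def x_def by simp
  let ?at = "\<lambda>(a, b). a * x + b"
  have "fiber n m \<subseteq> ?at ` branches n n r"
    using branches_image[of n n x r] m by (auto simp: fiber_def)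
  then have "fiber_weight n m \<le> (\<Sum>j\<in>?at ` branches n n r. real j + 1)"
    unfolding fiber_weight_def by (intro sum_mono2) (auto simp: finite_branches)
  also have "\<dots> \<le> (\<Sum>p\<in>branches n n r. real (?at p) + 1)"
    using sum_image_le[of "branches n n r" "\<lambda>j. real j + 1" ?at] finite_branches
    by (simp add: o_def)
  also have "\<dots> \<le> (\<Sum>(a, b)\<in>branches n n r. real a / 3 ^ n * (real m + 1))"
  proof (rule sum_mono, clarify)
    fix a b assume "(a, b) \<in> branches n n r"
    then have "3 ^ n * (b + 1) \<le> a * (r + 1)"
      using branches_invariant[of n n a b r] by simp
    then have "3 ^ n * (a * x + b + 1) \<le> a * (m + 1)"
      unfolding m by (simp add: algebra_simps)
    then have "real (3 ^ n * (a * x + b + 1)) \<le> real (a * (m + 1))"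
      by (simp only: of_nat_le_iff)
    then show "real (a * x + b) + 1 \<le> real a / 3 ^ n * (real m + 1)"
      by (simp add: field_simps)
  qed
  also have "\<dots> = slope_sum n r / 3 ^ n * (real m + 1)"
    unfolding slope_sum_def by (simp add: case_prod_unfold sum_distrib_right sum_divide_distrib)
  finally show ?thesis unfolding r_def .
qed

lemma slope_sum_le_fiber_weight:
  assumes x: "4 \<le> x" and small: "\<forall>(a, b)\<in>branches n n r. b < x"
  shows "real x * slope_sum n r \<le> fiber_weight n (3 ^ n * x + r)"
proof -
  let ?at = "\<lambda>(a, b). a * x + b"
  have "3 ^ n * 4 \<le> 3 ^ n * x"
    using x by simp
  then have "4 * 3 ^ n \<le> 3 ^ n * x + r + 1"
    by linarith
  then have "?at ` branches n n r \<subseteq> fiber n (3 ^ n * x + r)"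
    using mem_fiberI[of n _ "3 ^ n * x + r"] by (auto simp: branches_image)
  have "inj_on ?at (branches n n r)"
  proof (rule inj_onI, clarify)
    fix a b a' b'
    assume "(a, b) \<in> branches n n r" "(a', b') \<in> branches n n r" and eq: "a * x + b = a' * x + b'"
    then have "b < x" "b' < x" using small by auto
    then have "(a * x + b) div x = a" "(a' * x + b') div x = a'" by simp_all
    with eq have "a = a'" by simp
    with eq show "a = a' \<and> b = b'" by simp
  qed
  have "real x * slope_sum n r = (\<Sum>(a, b)\<in>branches n n r. real a * real x)"
    unfolding slope_sum_def by (simp add: sum_distrib_left case_prod_unfold mult.commute)
  also have "\<dots> \<le> (\<Sum>p\<in>branches n n r. real (?at p) + 1)"
    by (intro sum_mono) (auto split: prod.splits)
  also have "\<dots> = (\<Sum>j\<in>?at ` branches n n r. real j + 1)"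
    using \<open>inj_on ?at (branches n n r)\<close> by (simp add: sum.reindex)
  also have "\<dots> \<le> fiber_weight n (3 ^ n * x + r)"
    unfolding fiber_weight_def
    using \<open>?at ` branches n n r \<subseteq> fiber n (3 ^ n * x + r)\<close>
    by (intro sum_mono2[OF finite_fiber]) auto
  finally show ?thesis .
qed

lemma slope_sum_le_Top_pow_norm_sq:
  assumes bound: "\<forall>m. fiber_weight n m \<le> L * (real m + 1)"
  shows "slope_sum n r / 3 ^ n \<le> (Top_pow_norm n)\<^sup>2"
proof -
  let ?A = "slope_sum n r" and ?c = "real r + 1"
  let ?ratio = "\<lambda>x. real x * ?A / (3 ^ n * real x + ?c)"
  have "(\<lambda>x. ?A / (3 ^ n + ?c / real x)) \<longlonglongrightarrow> ?A / (3 ^ n + 0)"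
    by (intro tendsto_intros) simp
  moreover have "\<forall>\<^sub>F x in sequentially. ?A / (3 ^ n + ?c / real x) = ?ratio x"
    using eventually_gt_at_top[of 0] by eventually_elim (simp add: field_simps)
  ultimately have "?ratio \<longlonglongrightarrow> ?A / 3 ^ n"
    by (simp add: Lim_transform_eventually)
  moreover have "?ratio x \<le> (Top_pow_norm n)\<^sup>2" if "4 + sum snd (branches n n r) \<le> x" for x
  proof -
    have "snd p \<le> sum snd (branches n n r)" if "p \<in> branches n n r" for p
      by (intro member_le_sum) (simp_all add: that finite_branches)
    then have "\<forall>(a, b)\<in>branches n n r. b < x"
      using that by fastforce
    then have "real x * ?A \<le> fiber_weight n (3 ^ n * x + r)"
      using that by (intro slope_sum_le_fiber_weight) simp_all
    then have "?ratio x \<le> fiber_weight n (3 ^ n * x + r) / (real (3 ^ n * x + r) + 1)"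
      by (simp add: divide_right_mono add.assoc)
    also have "\<dots> \<le> (Top_pow_norm n)\<^sup>2"
      by (rule Top_pow_norm_sq_bounds(2)[OF bound])
    finally show ?thesis .
  qed
  ultimately show ?thesis
    by (intro LIMSEQ_le_const2) blast+
qed

lemma sum_Pset_coeff_eq_slope_sum:
  "(\<Sum>P\<in>Pset n n r. real_of_rat (coeff P 1) / 3 ^ n) = slope_sum n r / 3 ^ n"
proof -
  have "(\<Sum>P\<in>Pset n n r. real_of_rat (coeff P 1) / 3 ^ n) =
      (\<Sum>p\<in>branches n n r. real_of_rat (coeff (affine_poly p) 1) / 3 ^ n)"
    unfolding Pset_eq_image_branches[OF order_refl]
    by (rule sum.reindex[OF inj_on_subset[OF inj_affine_poly subset_UNIV], unfolded o_def])
  also have "\<dots> = slope_sum n r / 3 ^ n"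
    unfolding slope_sum_def by (simp add: affine_poly_def case_prod_unfold sum_divide_distrib)
  finally show ?thesis .
qed

theorem proposition4p2:
  fixes n :: nat
  assumes "n \<ge> 1"
  shows "(Top_pow_norm n)\<^sup>2 =
    Max ((\<lambda>r. \<Sum>P\<in>Pset n n r. real_of_rat (coeff P 1) / 3 ^ n) ` {0..3 ^ n - 1})"
proof -
  define L where "L = Max ((\<lambda>r. slope_sum n r / 3 ^ n) ` {0..3 ^ n - 1})"
  have bound: "\<forall>m. fiber_weight n m \<le> L * (real m + 1)"
  proof
    fix m :: nat
    have "m mod 3 ^ n < 3 ^ n" by simp
    then have "m mod 3 ^ n \<in> {0..3 ^ n - 1}" by (simp only: atLeastAtMost_iff) linarith
    then have "slope_sum n (m mod 3 ^ n) / 3 ^ n \<le> L"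
      unfolding L_def by (intro Max_ge) simp_all
    then have "slope_sum n (m mod 3 ^ n) / 3 ^ n * (real m + 1) \<le> L * (real m + 1)"
      by (intro mult_right_mono) simp_all
    with fiber_weight_le_slope_sum show "fiber_weight n m \<le> L * (real m + 1)"
      by (rule order_trans)
  qed
  have "L \<in> (\<lambda>r. slope_sum n r / 3 ^ n) ` {0..3 ^ n - 1}"
    unfolding L_def by (rule Max_in) auto
  then obtain r where "L = slope_sum n r / 3 ^ n" by blast
  then have "L \<le> (Top_pow_norm n)\<^sup>2"
    using slope_sum_le_Top_pow_norm_sq[OF bound] by simp
  with Top_pow_norm_sq_bounds(1)[OF bound] have "(Top_pow_norm n)\<^sup>2 = L"
    by (rule antisym)
  then show ?thesis
    unfolding sum_Pset_coeff_eq_slope_sum L_def .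
qed

end
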